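(* Let $f\in C([0,1])$ with $f>0$, $\lambda>0$, $H_\lambda=\{a\in C([0,1]):a>\lambda \text{ on }[0,1]\}$, and $F(a)(x)=\int_0^x \frac{\int_0^z f(s)ds}{a(z)}dz$. Let $W\subset C([0,1])$ be a finite-dimensional subspace, $K\subset W\cap H_\lambda$ compact and convex, and $(Q_N)_{N\in\mathbb{N}}$ a sequence of bounded finite-rank operators $Q_N:C([0,1])\to C([0,1])$ converging strongly to the identity. Then there exist $D\in\mathbb{N}$ and $C>0$ such that $\|a_1-a_2\|_\infty\le C\|Q_D(F(a_1))-Q_D(F(a_2))\|_\infty$ for all $a_1,a_2\in K$.
   Context: $C([0,1])$ carries the supremum norm $\|\cdot\|_\infty$. *)

theory Defs
  imports "HOL-Analysis.Analysis"
begin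

text \<open>Elements of C([0,1]) are represented by functions real => real that are
continuous on {0..1}; only their values on {0..1} matter.\<close>

definition C01 :: "(real \<Rightarrow> real) set" where
  "C01 = {g. continuous_on {0..1} g}"

definition supn :: "(real \<Rightarrow> real) \<Rightarrow> real" where
  "supn g = (SUP x\<in>{0..1}. \<bar>g x\<bar>)"

definition eq01 :: "(real \<Rightarrow> real) \<Rightarrow> (real \<Rightarrow> real) \<Rightarrow> bool" where
  "eq01 g h \<longleftrightarrow> (\<forall>x\<in>{0..1}. g x = h x)"

definition bounded_finite_rank_op :: "((real \<Rightarrow> real) \<Rightarrow> (real \<Rightarrow> real)) \<Rightarrow> bool" where
  "bounded_finite_rank_op Q \<longleftrightarrow>
     (\<forall>g\<in>C01. Q g \<in> C01) \<and>
     (\<forall>g\<in>C01. \<forall>h\<in>C01. eq01 g h \<longrightarrow> eq01 (Q g) (Q h)) \<and>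
     (\<forall>g\<in>C01. \<forall>h\<in>C01. eq01 (Q (\<lambda>x. g x + h x)) (\<lambda>x. Q g x + Q h x)) \<and>
     (\<forall>g\<in>C01. \<forall>c::real. eq01 (Q (\<lambda>x. c * g x)) (\<lambda>x. c * Q g x)) \<and>
     (\<exists>B. \<forall>g\<in>C01. supn (Q g) \<le> B * supn g) \<and>
     (\<exists>S. finite S \<and> S \<subseteq> C01 \<and>
        (\<forall>g\<in>C01. \<exists>c. eq01 (Q g) (\<lambda>x. \<Sum>s\<in>S. c s * s x)))"

definition fin_dim_subspace :: "(real \<Rightarrow> real) set \<Rightarrow> bool" where
  "fin_dim_subspace W \<longleftrightarrow>
     W \<subseteq> C01 \<and> (\<lambda>x. 0) \<in> W \<and>
     (\<forall>g\<in>W. \<forall>h\<in>W. (\<lambda>x. g x + h x) \<in> W) \<and>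
     (\<forall>g\<in>W. \<forall>c::real. (\<lambda>x. c * g x) \<in> W) \<and>
     (\<exists>S. finite S \<and> S \<subseteq> W \<and> (\<forall>w\<in>W. \<exists>c. eq01 w (\<lambda>x. \<Sum>s\<in>S. c s * s x)))"

definition sup_compact :: "(real \<Rightarrow> real) set \<Rightarrow> bool" where
  "sup_compact K \<longleftrightarrow>
     (\<forall>s::nat \<Rightarrow> real \<Rightarrow> real. (\<forall>n. s n \<in> K) \<longrightarrow>
        (\<exists>a\<in>K. \<exists>r::nat \<Rightarrow> nat. strict_mono r \<and>
           (\<lambda>n. supn (\<lambda>x. s (r n) x - a x)) \<longlonglongrightarrow> 0))"

definition fconvex :: "(real \<Rightarrow> real) set \<Rightarrow> bool" where
  "fconvex K \<longleftrightarrow> (\<forall>a\<in>K. \<forall>b\<in>K. \<forall>t\<in>{0..1::real}. (\<lambda>x. t * a x + (1 - t) * b x) \<in> K)"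

definition H :: "real \<Rightarrow> (real \<Rightarrow> real) set" where
  "H lam = {a\<in>C01. \<forall>x\<in>{0..1}. a x > lam}"

definition Fop :: "(real \<Rightarrow> real) \<Rightarrow> (real \<Rightarrow> real) \<Rightarrow> (real \<Rightarrow> real)" where
  "Fop f a = (\<lambda>x. integral {0..x} (\<lambda>z. integral {0..z} f / a z))"

end

theory Submission
  imports Defs
begin

text \<open>
  Suppose no pair \<open>(D, C)\<close> works. Then for every \<open>n\<close> there are \<open>a\<^sub>1\<^sup>n, a\<^sub>2\<^sup>n \<in> K\<close> with
  \<open>(n + 1) \<parallel>Q\<^sub>n (F a\<^sub>1\<^sup>n - F a\<^sub>2\<^sup>n)\<parallel> < \<parallel>a\<^sub>1\<^sup>n - a\<^sub>2\<^sup>n\<parallel> = \<delta>\<^sub>n\<close>. Compactness of \<open>K\<close> and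
  finite dimensionality of \<open>W\<close> give a subsequence along which \<open>a\<^sub>i\<^sup>n \<rightarrow> a\<^sub>i\<close> and the unit vectors
  \<open>(a\<^sub>1\<^sup>n - a\<^sub>2\<^sup>n) / \<delta>\<^sub>n \<rightarrow> h\<close>, so \<open>\<parallel>h\<parallel> = 1\<close>. As
  \<open>F a\<^sub>1 - F a\<^sub>2 = -\<integral>\<^sub>0\<^sup>x G (a\<^sub>1 - a\<^sub>2) / (a\<^sub>1 a\<^sub>2)\<close> with \<open>G z = \<integral>\<^sub>0\<^sup>z f > 0\<close> for \<open>z > 0\<close>, the quotients
  \<open>(F a\<^sub>1\<^sup>n - F a\<^sub>2\<^sup>n) / \<delta>\<^sub>n\<close> converge uniformly to \<open>v = -\<integral>\<^sub>0\<^sup>x G h / (a\<^sub>1 a\<^sub>2)\<close>, while their images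
  under \<open>Q\<^sub>n\<close> tend to \<open>0\<close>. The operators \<open>Q\<^sub>n\<close> are uniformly bounded (Banach--Steinhaus, via the
  Baire category theorem in the space of bounded continuous functions) and converge strongly,
  hence \<open>v = 0\<close>; differentiating, \<open>G h / (a\<^sub>1 a\<^sub>2) = 0\<close>, so \<open>h = 0\<close>, a contradiction.
\<close>

section \<open>The supremum norm on \<open>[0, 1]\<close>\<close>

lemma abs_le_supn:
  fixes g :: "real \<Rightarrow> real"
  assumes "continuous_on {0..1} g" "x \<in> {0..1}"
  shows "\<bar>g x\<bar> \<le> supn g"
proof -
  have "bounded (g ` {0..1})"
    by (rule compact_imp_bounded[OF compact_continuous_image[OF assms(1) compact_Icc]])
  then obtain B where "\<forall>y\<in>g ` {0..1}. norm y \<le> B"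
    by (auto simp: bounded_iff)
  then have "bdd_above ((\<lambda>x. \<bar>g x\<bar>) ` {0..1})"
    by (intro bdd_aboveI2[where M = B]) auto
  then show ?thesis
    unfolding supn_def by (rule cSUP_upper[OF assms(2)])
qed

lemma supn_le:
  fixes g :: "real \<Rightarrow> real"
  assumes "\<And>x. x \<in> {0..1} \<Longrightarrow> \<bar>g x\<bar> \<le> b"
  shows "supn g \<le> b"
  unfolding supn_def by (rule cSUP_least) (use assms in auto)

lemma supn_nonneg: "continuous_on {0..1} g \<Longrightarrow> 0 \<le> supn g"
  using abs_le_supn[of g 0] by force

lemma supn_cong: "(\<And>x. x \<in> {0..1} \<Longrightarrow> g x = h x) \<Longrightarrow> supn g = supn h"
  unfolding supn_def by (rule SUP_cong) auto

lemma supn_eq01: "eq01 g h \<Longrightarrow> supn g = supn h"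
  unfolding eq01_def by (rule supn_cong) auto

lemma supn_zero [simp]: "supn (\<lambda>x. 0) = 0"
  unfolding supn_def by simp

lemma supn_eq_0D:
  assumes "continuous_on {0..1} g" "supn g = 0" "x \<in> {0..1}"
  shows "g x = 0"
  using abs_le_supn[OF assms(1,3)] assms(2) by simp

lemma supn_le_add:
  assumes "\<And>x. x \<in> {0..1} \<Longrightarrow> \<bar>g x\<bar> \<le> \<bar>h1 x\<bar> + \<bar>h2 x\<bar>"
    and "continuous_on {0..1} h1" "continuous_on {0..1} h2"
  shows "supn g \<le> supn h1 + supn h2"
proof (rule supn_le)
  fix x :: real
  assume "x \<in> {0..1}"
  then show "\<bar>g x\<bar> \<le> supn h1 + supn h2"
    using assms(1) abs_le_supn[OF assms(2)] abs_le_supn[OF assms(3)] by fastforce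
qed

lemma abs_supn_diff_le:
  assumes "continuous_on {0..1} g" "continuous_on {0..1} h"
  shows "\<bar>supn g - supn h\<bar> \<le> supn (\<lambda>x. g x - h x)"
proof -
  have "supn g \<le> supn (\<lambda>x. g x - h x) + supn h"
    by (rule supn_le_add) (auto intro!: continuous_intros assms)
  moreover have "supn h \<le> supn (\<lambda>x. g x - h x) + supn g"
    by (rule supn_le_add) (auto intro!: continuous_intros assms)
  ultimately show ?thesis by linarith
qed

lemma supn_cmult:
  assumes "continuous_on {0..1} g"
  shows "supn (\<lambda>x. c * g x) = \<bar>c\<bar> * supn g"
proof (rule antisym)
  show "supn (\<lambda>x. c * g x) \<le> \<bar>c\<bar> * supn g"
    by (rule supn_le) (auto simp: abs_mult intro!: mult_left_mono abs_le_supn assms)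
next
  show "\<bar>c\<bar> * supn g \<le> supn (\<lambda>x. c * g x)"
  proof (cases "c = 0")
    case False
    have "supn g \<le> supn (\<lambda>x. c * g x) / \<bar>c\<bar>"
    proof (rule supn_le)
      fix x :: real
      assume "x \<in> {0..1}"
      then have "\<bar>c * g x\<bar> \<le> supn (\<lambda>x. c * g x)"
        by (intro abs_le_supn continuous_intros assms)
      then show "\<bar>g x\<bar> \<le> supn (\<lambda>x. c * g x) / \<bar>c\<bar>"
        using False by (simp add: abs_mult field_simps)
    qed
    then show ?thesis using False by (simp add: field_simps)
  qed simp
qed

lemma supn_normalised:
  assumes "continuous_on {0..1} g" "supn g \<noteq> 0"
  shows "supn (\<lambda>x. g x / supn g) = 1"
  using supn_cmult[OF assms(1), of "1 / supn g"] assms(2) supn_nonneg[OF assms(1)] by simp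

lemma uniform_limit_iff_supn:
  fixes g :: "nat \<Rightarrow> real \<Rightarrow> real"
  assumes "\<And>n. continuous_on {0..1} (\<lambda>x. g n x - l x)"
  shows "uniform_limit {0..1} g l sequentially \<longleftrightarrow> (\<lambda>n. supn (\<lambda>x. g n x - l x)) \<longlonglongrightarrow> 0"
proof
  assume u: "uniform_limit {0..1} g l sequentially"
  show "(\<lambda>n. supn (\<lambda>x. g n x - l x)) \<longlonglongrightarrow> 0"
  proof (rule LIMSEQ_I)
    fix e :: real
    assume "e > 0"
    then have "\<forall>\<^sub>F n in sequentially. \<forall>x\<in>{0..1}. dist (g n x) (l x) < e / 2"
      using uniform_limitD[OF u, of "e / 2"] by simp
    then obtain N where N: "\<And>n x. n \<ge> N \<Longrightarrow> x \<in> {0..1} \<Longrightarrow> \<bar>g n x - l x\<bar> < e / 2"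
      unfolding eventually_sequentially dist_real_def by blast
    have "supn (\<lambda>x. g n x - l x) \<le> e / 2" if "n \<ge> N" for n
      using N[OF that] by (intro supn_le) (simp add: less_imp_le)
    then show "\<exists>N. \<forall>n\<ge>N. norm (supn (\<lambda>x. g n x - l x) - 0) < e"
      using supn_nonneg[OF assms] \<open>e > 0\<close> by (intro exI[of _ N]) force
  qed
next
  assume lim: "(\<lambda>n. supn (\<lambda>x. g n x - l x)) \<longlonglongrightarrow> 0"
  show "uniform_limit {0..1} g l sequentially"
  proof (rule uniform_limitI)
    fix e :: real
    assume "e > 0"
    with lim have "\<forall>\<^sub>F n in sequentially. supn (\<lambda>x. g n x - l x) < e"
      by (rule order_tendstoD(2))
    then show "\<forall>\<^sub>F n in sequentially. \<forall>x\<in>{0..1}. dist (g n x) (l x) < e"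
    proof (rule eventually_mono)
      fix n
      assume "supn (\<lambda>x. g n x - l x) < e"
      then show "\<forall>x\<in>{0..1}. dist (g n x) (l x) < e"
        using abs_le_supn[OF assms[of n]] by (force simp: dist_real_def)
    qed
  qed
qed

lemma tendsto_supn_uniform_limit:
  assumes "\<And>n. continuous_on {0..1} (g n)" "continuous_on {0..1} l"
    and "uniform_limit {0..1} g l sequentially"
  shows "(\<lambda>n. supn (g n)) \<longlonglongrightarrow> supn l"
proof -
  have "continuous_on {0..1} (\<lambda>x. g n x - l x)" for n
    by (rule continuous_on_diff[OF assms(1,2)])
  then have diff: "(\<lambda>n. supn (\<lambda>x. g n x - l x)) \<longlonglongrightarrow> 0"
    using assms(3) by (simp only: uniform_limit_iff_supn)
  have bound: "\<bar>supn (g n) - supn l\<bar> \<le> supn (\<lambda>x. g n x - l x)" for n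
    by (rule abs_supn_diff_le[OF assms(1,2)])
  have "(\<lambda>n. supn (g n) - supn l) \<longlonglongrightarrow> 0"
    by (rule Lim_null_comparison[OF always_eventually diff]) (simp add: bound)
  from tendsto_add[OF this tendsto_const[of "supn l"]] show ?thesis
    by simp
qed

lemma continuous_on_span_sum:
  "S \<subseteq> C01 \<Longrightarrow> continuous_on {0..1} (\<lambda>x. \<Sum>s\<in>S. c s * s x)"
  by (intro continuous_on_sum continuous_intros) (auto simp: C01_def)

lemma supn_bcontfun_diff_le_dist:
  "supn (\<lambda>x. apply_bcontfun v x - apply_bcontfun w x) \<le> dist v w"
  by (rule supn_le) (metis dist_bounded dist_real_def)

lemma apply_bcontfun_C01: "apply_bcontfun v \<in> C01"
  by (simp add: C01_def)

lemma C01_bcontfun_extension: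
  assumes "g \<in> C01"
  obtains e :: "real \<Rightarrow>\<^sub>C real" where "\<And>x. x \<in> {0..1} \<Longrightarrow> e x = g x" "norm e \<le> supn g"
proof -
  have gc: "continuous_on {0..1} g" using assms by (simp add: C01_def)
  then have "continuous_on (cbox 0 1) g" by (simp add: cbox_interval)
  then obtain e :: "real \<Rightarrow>\<^sub>C real" where e1: "\<And>x. x \<in> cbox 0 1 \<Longrightarrow> e x = g x"
    and e2: "\<And>x. e x = g (clamp 0 1 x)"
    by (rule continuous_on_cbox_bcontfunE) blast
  have "norm e \<le> supn g"
  proof (rule norm_bound)
    fix x
    have "clamp 0 1 x \<in> {0..1::real}"
      using clamp_in_interval[of 0 1 x] by (simp add: cbox_interval)
    from abs_le_supn[OF gc this] show "norm (e x) \<le> supn g"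
      by (simp add: e2)
  qed
  then show ?thesis
    by (rule that[rotated]) (simp add: e1 cbox_interval)
qed

section \<open>Bounded linear operators on \<open>C([0, 1])\<close>\<close>

context
  fixes Q :: "(real \<Rightarrow> real) \<Rightarrow> (real \<Rightarrow> real)"
  assumes Q: "bounded_finite_rank_op Q"
begin

lemma bounded_finite_rank_op_C01: "g \<in> C01 \<Longrightarrow> Q g \<in> C01"
  using Q unfolding bounded_finite_rank_op_def by blast

lemma bounded_finite_rank_op_continuous: "g \<in> C01 \<Longrightarrow> continuous_on {0..1} (Q g)"
  using bounded_finite_rank_op_C01 by (simp add: C01_def)

lemma bounded_finite_rank_op_cong: "g \<in> C01 \<Longrightarrow> h \<in> C01 \<Longrightarrow> eq01 g h \<Longrightarrow> eq01 (Q g) (Q h)"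
  using Q unfolding bounded_finite_rank_op_def by blast

lemma bounded_finite_rank_op_add:
  "g \<in> C01 \<Longrightarrow> h \<in> C01 \<Longrightarrow> eq01 (Q (\<lambda>x. g x + h x)) (\<lambda>x. Q g x + Q h x)"
  using Q unfolding bounded_finite_rank_op_def by blast

lemma bounded_finite_rank_op_scale: "g \<in> C01 \<Longrightarrow> eq01 (Q (\<lambda>x. c * g x)) (\<lambda>x. c * Q g x)"
  using Q unfolding bounded_finite_rank_op_def by blast

lemma bounded_finite_rank_op_diff:
  assumes "g \<in> C01" "h \<in> C01"
  shows "eq01 (Q (\<lambda>x. g x - h x)) (\<lambda>x. Q g x - Q h x)"
proof -
  have h': "(\<lambda>x. (-1) * h x) \<in> C01"
    using assms by (auto simp: C01_def intro!: continuous_intros)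
  have "eq01 (Q (\<lambda>x. g x + (-1) * h x)) (\<lambda>x. Q g x + Q (\<lambda>x. (-1) * h x) x)"
    using bounded_finite_rank_op_add[OF assms(1) h'] by simp
  moreover have "eq01 (Q (\<lambda>x. (-1) * h x)) (\<lambda>x. (-1) * Q h x)"
    using bounded_finite_rank_op_scale[OF assms(2)] .
  ultimately show ?thesis by (simp add: eq01_def)
qed

lemma supn_bounded_finite_rank_op_scaled_diff:
  assumes "g \<in> C01" "h \<in> C01"
  shows "supn (Q (\<lambda>x. (g x - h x) / c)) = supn (\<lambda>x. Q g x - Q h x) / \<bar>c\<bar>"
proof -
  have "(\<lambda>x. g x - h x) \<in> C01"
    using assms by (auto simp: C01_def intro!: continuous_intros)
  from bounded_finite_rank_op_scale[OF this, of "1 / c"]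
  have "eq01 (Q (\<lambda>x. (1 / c) * (g x - h x))) (\<lambda>x. (1 / c) * (Q g x - Q h x))"
    using bounded_finite_rank_op_diff[OF assms] by (simp add: eq01_def)
  then have "supn (Q (\<lambda>x. (g x - h x) / c)) = supn (\<lambda>x. (1 / c) * (Q g x - Q h x))"
    by (simp add: supn_eq01)
  also have "\<dots> = \<bar>1 / c\<bar> * supn (\<lambda>x. Q g x - Q h x)"
    by (rule supn_cmult) (intro continuous_intros bounded_finite_rank_op_continuous assms)
  also have "\<dots> = supn (\<lambda>x. Q g x - Q h x) / \<bar>c\<bar>"
    by simp
  finally show ?thesis .
qed

lemma bounded_finite_rank_op_lipschitz:
  obtains B where "B \<ge> 0"
    "\<And>g h. g \<in> C01 \<Longrightarrow> h \<in> C01 \<Longrightarrow> supn (\<lambda>x. Q g x - Q h x) \<le> B * supn (\<lambda>x. g x - h x)"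
proof -
  obtain B where B: "\<forall>g\<in>C01. supn (Q g) \<le> B * supn g"
    using Q unfolding bounded_finite_rank_op_def by blast
  have "supn (\<lambda>x. Q g x - Q h x) \<le> max B 0 * supn (\<lambda>x. g x - h x)"
    if "g \<in> C01" "h \<in> C01" for g h
  proof -
    have gh: "(\<lambda>x. g x - h x) \<in> C01"
      using that by (auto simp: C01_def intro!: continuous_intros)
    have "supn (\<lambda>x. Q g x - Q h x) = supn (Q (\<lambda>x. g x - h x))"
      using bounded_finite_rank_op_diff[OF that] by (simp add: supn_eq01)
    also have "\<dots> \<le> B * supn (\<lambda>x. g x - h x)"
      using B gh by blast
    also have "\<dots> \<le> max B 0 * supn (\<lambda>x. g x - h x)"
      using gh by (intro mult_right_mono supn_nonneg) (auto simp: C01_def)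
    finally show ?thesis .
  qed
  then show ?thesis using that[of "max B 0"] by simp
qed

lemma continuous_on_supn_bounded_finite_rank_op:
  "continuous_on UNIV (\<lambda>v :: real \<Rightarrow>\<^sub>C real. supn (Q (apply_bcontfun v)))"
proof -
  obtain B where B: "B \<ge> 0"
    "\<And>g h. g \<in> C01 \<Longrightarrow> h \<in> C01 \<Longrightarrow> supn (\<lambda>x. Q g x - Q h x) \<le> B * supn (\<lambda>x. g x - h x)"
    using bounded_finite_rank_op_lipschitz by blast
  have "dist (supn (Q (apply_bcontfun v))) (supn (Q (apply_bcontfun w))) \<le> B * dist v w"
    for v w :: "real \<Rightarrow>\<^sub>C real"
  proof -
    have "dist (supn (Q (apply_bcontfun v))) (supn (Q (apply_bcontfun w)))
        \<le> supn (\<lambda>x. Q (apply_bcontfun v) x - Q (apply_bcontfun w) x)"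
      unfolding dist_real_def
      by (intro abs_supn_diff_le bounded_finite_rank_op_continuous apply_bcontfun_C01)
    also have "\<dots> \<le> B * dist v w"
      using B(2)[OF apply_bcontfun_C01 apply_bcontfun_C01] supn_bcontfun_diff_le_dist
        mult_left_mono[OF _ B(1)] order_trans by blast
    finally show ?thesis .
  qed
  then have "B-lipschitz_on UNIV (\<lambda>v. supn (Q (apply_bcontfun v)))"
    using B(1) by (intro lipschitz_onI)
  then show ?thesis by (rule lipschitz_on_continuous_on)
qed

lemma supn_bounded_finite_rank_op_eq_0:
  assumes g: "g \<in> C01" and "supn g = 0"
  shows "supn (Q g) = 0"
proof -
  have "eq01 g (\<lambda>x. 0 * g x)"
    using supn_eq_0D[OF _ assms(2)] g by (simp add: eq01_def C01_def)
  then have "eq01 (Q g) (Q (\<lambda>x. 0 * g x))"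
    using bounded_finite_rank_op_cong[OF g] by (simp add: C01_def)
  moreover have "eq01 (Q (\<lambda>x. 0 * g x)) (\<lambda>x. 0 * Q g x)"
    using bounded_finite_rank_op_scale[OF g] .
  ultimately have "supn (Q g) = supn (\<lambda>x. 0)"
    by (intro supn_cong) (auto simp: eq01_def)
  then show ?thesis by simp
qed

text \<open>The rescaling step of the Banach--Steinhaus argument.\<close>

lemma bounded_finite_rank_op_bound_from_ball:
  fixes v0 :: "real \<Rightarrow>\<^sub>C real"
  assumes "r > 0" and ball: "\<And>v. v \<in> ball v0 r \<Longrightarrow> supn (Q (apply_bcontfun v)) \<le> M"
    and g: "g \<in> C01"
  shows "supn (Q g) \<le> 4 * M / r * supn g"
proof (cases "supn g = 0")
  case True
  then show ?thesis using supn_bounded_finite_rank_op_eq_0[OF g] by simp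
next
  case False
  have gc: "continuous_on {0..1} g" using g by (simp add: C01_def)
  then have s: "supn g > 0" using False supn_nonneg[OF gc] by simp
  define t where "t = r / (2 * supn g)"
  have t: "t > 0" using s \<open>r > 0\<close> by (simp add: t_def)
  have w: "(\<lambda>x. t * g x) \<in> C01" using gc by (auto simp: C01_def intro!: continuous_intros)
  then obtain ew :: "real \<Rightarrow>\<^sub>C real" where ew: "\<And>x. x \<in> {0..1} \<Longrightarrow> ew x = t * g x"
    "norm ew \<le> supn (\<lambda>x. t * g x)"
    by (rule C01_bcontfun_extension) blast
  have "supn (\<lambda>x. t * g x) = t * supn g"
    using supn_cmult[OF gc, of t] t by simp
  also have "\<dots> = r / 2"
    using s by (simp add: t_def)
  finally have "norm ew \<le> r / 2"
    using ew(2) by simp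
  then have M1: "supn (Q (apply_bcontfun (v0 + ew))) \<le> M"
    using \<open>r > 0\<close> by (intro ball) (simp add: dist_norm)
  have M2: "supn (Q (apply_bcontfun v0)) \<le> M"
    using ball \<open>r > 0\<close> by simp
  have "t * supn (Q g) = supn (Q ew)"
  proof -
    have "eq01 (Q ew) (Q (\<lambda>x. t * g x))"
      using bounded_finite_rank_op_cong[OF apply_bcontfun_C01 w] ew(1) by (simp add: eq01_def)
    then have "eq01 (Q ew) (\<lambda>x. t * Q g x)"
      using bounded_finite_rank_op_scale[OF g, of t] by (simp add: eq01_def)
    then show ?thesis
      using supn_cmult[OF bounded_finite_rank_op_continuous[OF g], of t] t by (simp add: supn_eq01)
  qed
  also have "\<dots> \<le> supn (Q (apply_bcontfun (v0 + ew))) + supn (Q (apply_bcontfun v0))"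
  proof (rule supn_le_add)
    fix x :: real
    assume "x \<in> {0..1}"
    then have "Q (apply_bcontfun (v0 + ew)) x = Q v0 x + Q ew x"
      using bounded_finite_rank_op_add[OF apply_bcontfun_C01 apply_bcontfun_C01, of v0 ew]
      by (simp add: eq01_def plus_bcontfun.rep_eq)
    then show "\<bar>Q ew x\<bar> \<le> \<bar>Q (apply_bcontfun (v0 + ew)) x\<bar> + \<bar>Q v0 x\<bar>"
      by linarith
  qed (rule bounded_finite_rank_op_continuous[OF apply_bcontfun_C01])+
  also have "\<dots> \<le> 2 * M" using M1 M2 by simp
  finally have "supn (Q g) \<le> 2 * M / t" using t by (simp add: field_simps)
  also have "\<dots> = 4 * M / r * supn g" using s \<open>r > 0\<close> by (simp add: t_def field_simps)
  finally show ?thesis .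
qed

end

section \<open>Uniform boundedness\<close>

theorem uniform_boundedness:
  fixes Q :: "nat \<Rightarrow> (real \<Rightarrow> real) \<Rightarrow> (real \<Rightarrow> real)"
  assumes Q: "\<And>N. bounded_finite_rank_op (Q N)"
    and pointwise: "\<And>g. g \<in> C01 \<Longrightarrow> \<exists>K. \<forall>N. supn (Q N g) \<le> K"
  shows "\<exists>B. \<forall>N. \<forall>g\<in>C01. supn (Q N g) \<le> B * supn g"
proof -
  define A where "A M = {v. \<forall>N. supn (Q N (apply_bcontfun v)) \<le> real M}" for M :: nat
  have closed: "closed (A M)" for M
    unfolding A_def
    by (intro closed_Collect_all closed_Collect_le continuous_on_const
        continuous_on_supn_bounded_finite_rank_op Q)
  have cover: "\<Union>(range A) = UNIV"
  proof (intro set_eqI iffI)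
    fix v :: "real \<Rightarrow>\<^sub>C real"
    obtain K where K: "\<And>N. supn (Q N v) \<le> K"
      using pointwise[OF apply_bcontfun_C01] by blast
    have "supn (Q N v) \<le> real (nat \<lceil>K\<rceil>)" for N
      using K[of N] real_nat_ceiling_ge[of K] by linarith
    then have "v \<in> A (nat \<lceil>K\<rceil>)"
      unfolding A_def by blast
    then show "v \<in> \<Union>(range A)" by blast
  qed simp
  have "\<exists>M. interior (A M) \<noteq> {}"
  proof (rule ccontr)
    assume "\<not> ?thesis"
    then have "euclidean interior_of \<Union>(range A) = {}"
      by (intro Baire_category_alt) (auto simp: completely_metrizable_space_euclidean closed)
    then show False by (simp add: cover)
  qed
  then obtain M v0 r where "r > 0" and ball: "ball v0 r \<subseteq> A M"
    using mem_interior by blast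
  have "supn (Q N g) \<le> 4 * real M / r * supn g" if "g \<in> C01" for N g
  proof (rule bounded_finite_rank_op_bound_from_ball[OF Q \<open>r > 0\<close> _ that])
    fix v
    assume "v \<in> ball v0 r"
    then show "supn (Q N (apply_bcontfun v)) \<le> real M"
      using ball unfolding A_def by blast
  qed
  then show ?thesis by blast
qed

corollary strong_convergence_imp_uniformly_bounded:
  fixes Q :: "nat \<Rightarrow> (real \<Rightarrow> real) \<Rightarrow> (real \<Rightarrow> real)"
  assumes Q: "\<And>N. bounded_finite_rank_op (Q N)"
    and conv: "\<And>g. g \<in> C01 \<Longrightarrow> (\<lambda>N. supn (\<lambda>x. Q N g x - g x)) \<longlonglongrightarrow> 0"
  shows "\<exists>B. \<forall>N. \<forall>g\<in>C01. supn (Q N g) \<le> B * supn g"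
proof (rule uniform_boundedness[OF Q])
  fix g
  assume g: "g \<in> C01"
  obtain K where K: "\<And>N. norm (supn (\<lambda>x. Q N g x - g x)) \<le> K"
    using convergent_imp_Bseq[OF convergentI[OF conv[OF g]]] unfolding Bseq_def by blast
  have "supn (Q N g) \<le> K + supn g" for N
  proof -
    have "supn (Q N g) \<le> supn (\<lambda>x. Q N g x - g x) + supn g"
      using g by (intro supn_le_add)
        (auto simp: C01_def intro!: continuous_intros bounded_finite_rank_op_continuous[OF Q])
    then show ?thesis using K[of N] by simp
  qed
  then show "\<exists>K. \<forall>N. supn (Q N g) \<le> K" by blast
qed

lemma supn_eq_0_if_images_vanish:
  fixes Q :: "nat \<Rightarrow> (real \<Rightarrow> real) \<Rightarrow> (real \<Rightarrow> real)"
  assumes Q: "\<And>n. bounded_finite_rank_op (Q n)"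
    and bound: "\<And>n g. g \<in> C01 \<Longrightarrow> supn (Q n g) \<le> B * supn g"
    and strong: "(\<lambda>n. supn (\<lambda>x. Q n v x - v x)) \<longlonglongrightarrow> 0"
    and v: "\<And>n. vs n \<in> C01" "v \<in> C01" "uniform_limit {0..1} vs v sequentially"
    and vanish: "(\<lambda>n. supn (Q n (vs n))) \<longlonglongrightarrow> 0"
  shows "supn v = 0"
proof -
  have vc: "continuous_on {0..1} v" using v(2) by (simp add: C01_def)
  have diff: "(\<lambda>x. vs n x - v x) \<in> C01" for n
    using v(1,2) by (auto simp: C01_def intro!: continuous_intros)
  have "(\<lambda>n. supn (\<lambda>x. vs n x - v x)) \<longlonglongrightarrow> 0"
    using v(3) diff by (subst uniform_limit_iff_supn[symmetric]) (auto simp: C01_def)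
  then have "(\<lambda>n. supn (\<lambda>x. Q n v x - v x) + B * supn (\<lambda>x. vs n x - v x) + supn (Q n (vs n))) \<longlonglongrightarrow> 0 + B * 0 + 0"
    by (intro tendsto_intros strong vanish)
  moreover have "supn v \<le> supn (\<lambda>x. Q n v x - v x) + B * supn (\<lambda>x. vs n x - v x) + supn (Q n (vs n))" for n
  proof -
    have Qc: "continuous_on {0..1} (Q n g)" if "g \<in> C01" for g
      using bounded_finite_rank_op_continuous[OF Q that] .
    have "supn (\<lambda>x. Q n (vs n) x - Q n v x) = supn (Q n (\<lambda>x. vs n x - v x))"
      using supn_eq01[OF bounded_finite_rank_op_diff[OF Q v(1,2)]] by simp
    also have "\<dots> \<le> B * supn (\<lambda>x. vs n x - v x)"
      using bound[OF diff] .
    finally have "supn (\<lambda>x. Q n (vs n) x - Q n v x) \<le> B * supn (\<lambda>x. vs n x - v x)" .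
    moreover have "supn v \<le> supn (\<lambda>x. Q n v x - v x) + supn (\<lambda>x. Q n (vs n) x - Q n v x) + supn (Q n (vs n))"
    proof (rule supn_le)
      fix x :: real
      assume x: "x \<in> {0..1}"
      have "\<bar>Q n v x - v x\<bar> \<le> supn (\<lambda>x. Q n v x - v x)"
        "\<bar>Q n (vs n) x - Q n v x\<bar> \<le> supn (\<lambda>x. Q n (vs n) x - Q n v x)"
        "\<bar>Q n (vs n) x\<bar> \<le> supn (Q n (vs n))"
        by (intro abs_le_supn x continuous_intros Qc v(1,2) vc)+
      then show "\<bar>v x\<bar> \<le> supn (\<lambda>x. Q n v x - v x) + supn (\<lambda>x. Q n (vs n) x - Q n v x) + supn (Q n (vs n))"
        by linarith
    qed
    ultimately show ?thesis by linarith
  qed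
  ultimately have "supn v \<le> 0"
    by (intro LIMSEQ_le_const[of _ 0]) auto
  then show ?thesis
    using supn_nonneg[OF vc] by simp
qed

section \<open>Compactness in finite-dimensional subspaces\<close>

definition span_seq_compact :: "(real \<Rightarrow> real) set \<Rightarrow> bool" where
  "span_seq_compact S \<longleftrightarrow>
     (\<forall>(cs :: nat \<Rightarrow> (real \<Rightarrow> real) \<Rightarrow> real) M. (\<forall>n. supn (\<lambda>x. \<Sum>s\<in>S. cs n s * s x) \<le> M) \<longrightarrow>
        (\<exists>r c. strict_mono r \<and>
           (\<lambda>n. supn (\<lambda>x. (\<Sum>s\<in>S. cs (r n) s * s x) - (\<Sum>s\<in>S. c s * s x))) \<longlonglongrightarrow> 0))"

lemma span_seq_compactD:
  fixes cs :: "nat \<Rightarrow> (real \<Rightarrow> real) \<Rightarrow> real"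
  assumes "span_seq_compact S" "\<And>n. supn (\<lambda>x. \<Sum>s\<in>S. cs n s * s x) \<le> M"
  obtains r c where "strict_mono r"
    "(\<lambda>n. supn (\<lambda>x. (\<Sum>s\<in>S. cs (r n) s * s x) - (\<Sum>s\<in>S. c s * s x))) \<longlonglongrightarrow> 0"
  using assms unfolding span_seq_compact_def by blast

lemma span_seq_compact_empty: "span_seq_compact {}"
  unfolding span_seq_compact_def using strict_mono_id by auto

lemma span_seq_compact_insert_bounded_coeff:
  fixes cs :: "nat \<Rightarrow> (real \<Rightarrow> real) \<Rightarrow> real"
  assumes "S \<subseteq> C01" "s \<in> C01" "s \<notin> S" "finite S" "span_seq_compact S"
    and bound: "\<And>n. supn (\<lambda>x. \<Sum>u\<in>insert s S. cs n u * u x) \<le> M"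
    and coeff: "\<And>n. \<bar>cs n s\<bar> \<le> B"
  shows "\<exists>r c. strict_mono r \<and>
    (\<lambda>n. supn (\<lambda>x. (\<Sum>u\<in>insert s S. cs (r n) u * u x) - (\<Sum>u\<in>insert s S. c u * u x))) \<longlonglongrightarrow> 0"
proof -
  have sc: "continuous_on {0..1} s" using assms(2) by (simp add: C01_def)
  have sum_insert: "(\<Sum>u\<in>insert s S. c u * u x) = c s * s x + (\<Sum>u\<in>S. c u * u x)" for c x
    using assms(3,4) by simp
  have cont_insert: "continuous_on {0..1} (\<lambda>x. \<Sum>u\<in>insert s S. c u * u x)" for c
    using assms(1,2) by (intro continuous_on_span_sum) blast
  have "bounded (range (\<lambda>n. cs n s))" using coeff unfolding bounded_iff by auto
  then obtain c0 r1 where r1: "strict_mono r1" and c0: "((\<lambda>n. cs n s) \<circ> r1) \<longlonglongrightarrow> c0"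
    using bounded_imp_convergent_subsequence by blast
  have "supn (\<lambda>x. \<Sum>u\<in>S. cs (r1 n) u * u x) \<le> M + B * supn s" for n
  proof (rule supn_le)
    fix x :: real
    assume x: "x \<in> {0..1}"
    have "\<bar>cs (r1 n) s * s x\<bar> \<le> B * supn s"
      unfolding abs_mult by (intro mult_mono coeff abs_le_supn sc x) (use coeff[of n] in auto)
    then show "\<bar>\<Sum>u\<in>S. cs (r1 n) u * u x\<bar> \<le> M + B * supn s"
      using abs_le_supn[OF cont_insert[of "cs (r1 n)"] x] bound[of "r1 n"] sum_insert[of "cs (r1 n)" x]
      by linarith
  qed
  then obtain r2 d where r2: "strict_mono r2"
    and d: "(\<lambda>n. supn (\<lambda>x. (\<Sum>u\<in>S. cs (r1 (r2 n)) u * u x) - (\<Sum>u\<in>S. d u * u x))) \<longlonglongrightarrow> 0"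
    using span_seq_compactD[OF assms(5), of "\<lambda>n. cs (r1 n)"] by blast
  define c where "c = d(s := c0)"
  have c_S: "(\<Sum>u\<in>S. c u * u x) = (\<Sum>u\<in>S. d u * u x)" for x
    unfolding c_def using assms(3) by (intro sum.cong) auto
  let ?D = "\<lambda>n x. (\<Sum>u\<in>S. cs (r1 (r2 n)) u * u x) - (\<Sum>u\<in>S. d u * u x)"
  let ?E = "\<lambda>n x. (\<Sum>u\<in>insert s S. cs (r1 (r2 n)) u * u x) - (\<Sum>u\<in>insert s S. c u * u x)"
  have upper: "supn (?E n) \<le> \<bar>cs (r1 (r2 n)) s - c0\<bar> * supn s + supn (?D n)" for n
  proof (rule supn_le)
    fix x :: real
    assume x: "x \<in> {0..1}"
    have "?E n x = (cs (r1 (r2 n)) s - c0) * s x + ?D n x"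
      unfolding sum_insert c_S by (simp add: c_def algebra_simps)
    moreover have "\<bar>(cs (r1 (r2 n)) s - c0) * s x\<bar> \<le> \<bar>cs (r1 (r2 n)) s - c0\<bar> * supn s"
      unfolding abs_mult by (intro mult_left_mono abs_le_supn sc x) auto
    moreover have "\<bar>?D n x\<bar> \<le> supn (?D n)"
      by (intro abs_le_supn x continuous_intros continuous_on_span_sum assms(1))
    ultimately show "\<bar>?E n x\<bar> \<le> \<bar>cs (r1 (r2 n)) s - c0\<bar> * supn s + supn (?D n)"
      by linarith
  qed
  have "(\<lambda>n. cs (r1 (r2 n)) s) \<longlonglongrightarrow> c0"
    using LIMSEQ_subseq_LIMSEQ[OF c0 r2] by (simp add: o_def)
  then have "(\<lambda>n. \<bar>cs (r1 (r2 n)) s - c0\<bar> * supn s + supn (?D n)) \<longlonglongrightarrow> \<bar>c0 - c0\<bar> * supn s + 0"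
    by (intro tendsto_intros d)
  then have upper_lim: "(\<lambda>n. \<bar>cs (r1 (r2 n)) s - c0\<bar> * supn s + supn (?D n)) \<longlonglongrightarrow> 0"
    by simp
  have "0 \<le> supn (?E n)" for n
    by (intro supn_nonneg continuous_intros cont_insert)
  then have "(\<lambda>n. supn (?E n)) \<longlonglongrightarrow> 0"
    by (intro real_tendsto_sandwich[OF _ _ tendsto_const upper_lim]) (use upper in auto)
  then show ?thesis
    using strict_mono_o[OF r1 r2] by (auto simp: o_def)
qed

text \<open>If the coefficient of \<open>s\<close> blows up, dividing by it shows that \<open>s\<close> lies in the span of \<open>S\<close>.\<close>

lemma in_span_if_coeff_unbounded:
  fixes cs :: "nat \<Rightarrow> (real \<Rightarrow> real) \<Rightarrow> real"
  assumes "S \<subseteq> C01" "s \<in> C01" "s \<notin> S" "finite S" "span_seq_compact S"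
    and bound: "\<And>n. supn (\<lambda>x. \<Sum>u\<in>insert s S. cs n u * u x) \<le> M"
    and unbounded: "\<And>B. \<exists>n. B < \<bar>cs n s\<bar>"
  obtains d where "\<And>x. x \<in> {0..1} \<Longrightarrow> s x = (\<Sum>u\<in>S. d u * u x)"
proof -
  have sc: "continuous_on {0..1} s" using assms(2) by (simp add: C01_def)
  have sum_insert: "(\<Sum>u\<in>insert s S. c u * u x) = c s * s x + (\<Sum>u\<in>S. c u * u x)" for c x
    using assms(3,4) by simp
  have cont_insert: "continuous_on {0..1} (\<lambda>x. \<Sum>u\<in>insert s S. c u * u x)" for c
    using assms(1,2) by (intro continuous_on_span_sum) blast
  have M: "M \<ge> 0"
    using supn_nonneg[OF cont_insert[of "cs 0"]] bound[of 0] by linarith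
  have pointwise: "\<bar>\<Sum>u\<in>insert s S. cs n u * u x\<bar> \<le> M" if "x \<in> {0..1}" for n x
    using abs_le_supn[OF cont_insert[of "cs n"] that] bound[of n] by linarith
  have "\<forall>j::nat. \<exists>n. real j + 1 < \<bar>cs n s\<bar>"
    using unbounded by blast
  then obtain nj where nj: "\<And>j. real j + 1 < \<bar>cs (nj j) s\<bar>"
    by metis
  define t where "t j = cs (nj j) s" for j
  have t: "t j \<noteq> 0" "1 \<le> \<bar>t j\<bar>" "real j + 1 < \<bar>t j\<bar>" for j
    using nj[of j] by (auto simp: t_def)
  define ks where "ks j u = cs (nj j) u / t j" for j u
  have ks_sum: "(\<Sum>u\<in>S. ks j u * u x) = (\<Sum>u\<in>insert s S. cs (nj j) u * u x) / t j - s x" for j x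
  proof -
    have "(\<Sum>u\<in>S. ks j u * u x) = (\<Sum>u\<in>S. cs (nj j) u * u x) / t j"
      unfolding ks_def sum_divide_distrib by (intro sum.cong) auto
    then show ?thesis
      unfolding sum_insert using t(1)[of j] by (simp add: t_def field_simps)
  qed
  have scaled: "\<bar>(\<Sum>u\<in>insert s S. cs (nj j) u * u x) / t j\<bar> \<le> M / \<bar>t j\<bar>" if "x \<in> {0..1}" for j x
    using pointwise[OF that, of "nj j"] t(1)[of j] by (simp add: abs_divide divide_right_mono)
  have "supn (\<lambda>x. \<Sum>u\<in>S. ks j u * u x) \<le> M + supn s" for j
  proof (rule supn_le)
    fix x :: real
    assume x: "x \<in> {0..1}"
    have "M / \<bar>t j\<bar> \<le> M"
      using M t(2)[of j] by (simp add: divide_le_eq mult_le_cancel_left1)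
    then show "\<bar>\<Sum>u\<in>S. ks j u * u x\<bar> \<le> M + supn s"
      using scaled[OF x, of j] abs_le_supn[OF sc x] unfolding ks_sum by linarith
  qed
  then obtain r d where r: "strict_mono r"
    and d: "(\<lambda>n. supn (\<lambda>x. (\<Sum>u\<in>S. ks (r n) u * u x) - (\<Sum>u\<in>S. d u * u x))) \<longlonglongrightarrow> 0"
    using span_seq_compactD[OF assms(5)] by blast
  let ?D = "\<lambda>n x. (\<Sum>u\<in>S. ks (r n) u * u x) - (\<Sum>u\<in>S. d u * u x)"
  have upper: "supn (\<lambda>x. s x + (\<Sum>u\<in>S. d u * u x)) \<le> M / (real n + 1) + supn (?D n)" for n
  proof (rule supn_le)
    fix x :: real
    assume x: "x \<in> {0..1}"
    have "M / \<bar>t (r n)\<bar> \<le> M / (real n + 1)"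
      using t(3)[of "r n"] seq_suble[OF r, of n] M by (intro divide_left_mono) auto
    moreover have "\<bar>?D n x\<bar> \<le> supn (?D n)"
      by (intro abs_le_supn x continuous_intros continuous_on_span_sum assms(1))
    moreover have "s x + (\<Sum>u\<in>S. d u * u x) = (\<Sum>u\<in>insert s S. cs (nj (r n)) u * u x) / t (r n) - ?D n x"
      unfolding ks_sum by simp
    ultimately show "\<bar>s x + (\<Sum>u\<in>S. d u * u x)\<bar> \<le> M / (real n + 1) + supn (?D n)"
      using scaled[OF x, of "r n"] by linarith
  qed
  have "(\<lambda>n. M / real (Suc n)) \<longlonglongrightarrow> 0"
    by (rule LIMSEQ_Suc) (rule lim_const_over_n)
  then have "(\<lambda>n. M / (real n + 1) + supn (?D n)) \<longlonglongrightarrow> 0 + 0"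
    by (intro tendsto_add d) (simp add: add.commute)
  then have "supn (\<lambda>x. s x + (\<Sum>u\<in>S. d u * u x)) \<le> 0"
    using upper by (intro LIMSEQ_le_const[of _ 0]) auto
  moreover have cont: "continuous_on {0..1} (\<lambda>x. s x + (\<Sum>u\<in>S. d u * u x))"
    using sc assms(1) by (intro continuous_on_add continuous_on_span_sum)
  ultimately have "supn (\<lambda>x. s x + (\<Sum>u\<in>S. d u * u x)) = 0"
    using supn_nonneg by (simp add: order_antisym)
  then have "s x + (\<Sum>u\<in>S. d u * u x) = 0" if "x \<in> {0..1}" for x
    using supn_eq_0D[OF cont _ that] by simp
  then show ?thesis
    by (intro that[of "\<lambda>u. - d u"]) (simp add: sum_negf eq_neg_iff_add_eq_0)
qed

lemma span_seq_compact_insert_redundant: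
  assumes "s \<notin> S" "finite S" "span_seq_compact S"
    and in_span: "\<And>x. x \<in> {0..1} \<Longrightarrow> s x = (\<Sum>u\<in>S. d u * u x)"
  shows "span_seq_compact (insert s S)"
  unfolding span_seq_compact_def
proof (intro allI impI)
  fix cs :: "nat \<Rightarrow> (real \<Rightarrow> real) \<Rightarrow> real" and M :: real
  assume bound: "\<forall>n. supn (\<lambda>x. \<Sum>u\<in>insert s S. cs n u * u x) \<le> M"
  define cs' where "cs' n u = cs n u + cs n s * d u" for n u
  have sum_eq: "(\<Sum>u\<in>insert s S. c u * u x) = (\<Sum>u\<in>S. (c u + c s * d u) * u x)"
    if "x \<in> {0..1}" for c x
    using assms(1,2) in_span[OF that]
    by (simp add: distrib_right sum.distrib sum_distrib_left mult.assoc)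
  have "supn (\<lambda>x. \<Sum>u\<in>S. cs' n u * u x) = supn (\<lambda>x. \<Sum>u\<in>insert s S. cs n u * u x)" for n
    by (rule supn_cong) (simp add: sum_eq cs'_def)
  then have "supn (\<lambda>x. \<Sum>u\<in>S. cs' n u * u x) \<le> M" for n
    using bound by simp
  then obtain r c' where r: "strict_mono r"
    and c': "(\<lambda>n. supn (\<lambda>x. (\<Sum>u\<in>S. cs' (r n) u * u x) - (\<Sum>u\<in>S. c' u * u x))) \<longlonglongrightarrow> 0"
    using span_seq_compactD[OF assms(3)] by blast
  define c where "c = c'(s := 0)"
  have "(\<Sum>u\<in>S. (c u + c s * d u) * u x) = (\<Sum>u\<in>S. c' u * u x)" for x
    unfolding c_def using assms(1) by (intro sum.cong) auto
  then have "(\<lambda>n. supn (\<lambda>x. (\<Sum>u\<in>insert s S. cs (r n) u * u x) - (\<Sum>u\<in>insert s S. c u * u x)))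
      = (\<lambda>n. supn (\<lambda>x. (\<Sum>u\<in>S. cs' (r n) u * u x) - (\<Sum>u\<in>S. c' u * u x)))"
    by (intro ext supn_cong) (simp add: sum_eq cs'_def)
  then show "\<exists>r c. strict_mono r \<and>
      (\<lambda>n. supn (\<lambda>x. (\<Sum>u\<in>insert s S. cs (r n) u * u x) - (\<Sum>u\<in>insert s S. c u * u x))) \<longlonglongrightarrow> 0"
    using r c' by (intro exI[of _ r] exI[of _ c]) simp
qed

lemma span_seq_compact_insert:
  assumes "S \<subseteq> C01" "s \<in> C01" "s \<notin> S" "finite S" "span_seq_compact S"
  shows "span_seq_compact (insert s S)"
proof (cases "\<exists>d. \<forall>x\<in>{0..1}. s x = (\<Sum>u\<in>S. d u * u x)")
  case True
  then obtain d where "\<forall>x\<in>{0..1}. s x = (\<Sum>u\<in>S. d u * u x)" by blast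
  then show ?thesis
    by (intro span_seq_compact_insert_redundant[OF assms(3,4,5), of d]) auto
next
  case not_in_span: False
  show ?thesis
    unfolding span_seq_compact_def
  proof (intro allI impI)
    fix cs :: "nat \<Rightarrow> (real \<Rightarrow> real) \<Rightarrow> real" and M :: real
    assume bound: "\<forall>n. supn (\<lambda>x. \<Sum>u\<in>insert s S. cs n u * u x) \<le> M"
    have "\<exists>B. \<forall>n. \<bar>cs n s\<bar> \<le> B"
    proof (rule ccontr)
      assume "\<not> ?thesis"
      then have "\<exists>n. B < \<bar>cs n s\<bar>" for B
        by (simp add: not_le)
      then obtain d where "\<And>x. x \<in> {0..1} \<Longrightarrow> s x = (\<Sum>u\<in>S. d u * u x)"
        using in_span_if_coeff_unbounded[OF assms, of cs M] bound by blast
      then show False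
        using not_in_span by blast
    qed
    then obtain B where "\<And>n. \<bar>cs n s\<bar> \<le> B" by blast
    then show "\<exists>r c. strict_mono r \<and>
        (\<lambda>n. supn (\<lambda>x. (\<Sum>u\<in>insert s S. cs (r n) u * u x) - (\<Sum>u\<in>insert s S. c u * u x))) \<longlonglongrightarrow> 0"
      using span_seq_compact_insert_bounded_coeff[OF assms] bound by blast
  qed
qed

lemma span_seq_compact: "finite S \<Longrightarrow> S \<subseteq> C01 \<Longrightarrow> span_seq_compact S"
  by (induction S rule: finite_induct) (simp_all add: span_seq_compact_empty span_seq_compact_insert)

lemma fin_dim_subspace_C01: "fin_dim_subspace W \<Longrightarrow> W \<subseteq> C01"
  unfolding fin_dim_subspace_def by (elim conjE)

lemma fin_dim_subspace_add: "fin_dim_subspace W \<Longrightarrow> g \<in> W \<Longrightarrow> h \<in> W \<Longrightarrow> (\<lambda>x. g x + h x) \<in> W"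
  unfolding fin_dim_subspace_def by (elim conjE) simp

lemma fin_dim_subspace_scale: "fin_dim_subspace W \<Longrightarrow> g \<in> W \<Longrightarrow> (\<lambda>x. c * g x) \<in> W"
  unfolding fin_dim_subspace_def by (elim conjE) simp

lemma fin_dim_subspace_spanning_set:
  "fin_dim_subspace W \<Longrightarrow> \<exists>S. finite S \<and> S \<subseteq> W \<and> (\<forall>w\<in>W. \<exists>c. eq01 w (\<lambda>x. \<Sum>s\<in>S. c s * s x))"
  unfolding fin_dim_subspace_def by (elim conjE)

lemma fin_dim_subspace_bounded_subseq:
  fixes h :: "nat \<Rightarrow> real \<Rightarrow> real"
  assumes "fin_dim_subspace W" "\<And>n. h n \<in> W" "\<And>n. supn (h n) \<le> M"
  obtains r H where "strict_mono r" "continuous_on {0..1} H"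
    "uniform_limit {0..1} (\<lambda>n. h (r n)) H sequentially"
proof -
  from fin_dim_subspace_C01[OF assms(1)] fin_dim_subspace_spanning_set[OF assms(1)]
  obtain S where S: "finite S" "S \<subseteq> C01" and span: "\<forall>w\<in>W. \<exists>c. eq01 w (\<lambda>x. \<Sum>s\<in>S. c s * s x)"
    by blast
  have "\<forall>n. \<exists>c. eq01 (h n) (\<lambda>x. \<Sum>s\<in>S. c s * s x)"
    using span assms(2) by blast
  then obtain cs where cs: "\<And>n. eq01 (h n) (\<lambda>x. \<Sum>s\<in>S. cs n s * s x)"
    by metis
  have "supn (\<lambda>x. \<Sum>s\<in>S. cs n s * s x) \<le> M" for n
    using supn_eq01[OF cs[of n]] assms(3)[of n] by simp
  then obtain r c where r: "strict_mono r"
    and c: "(\<lambda>n. supn (\<lambda>x. (\<Sum>s\<in>S. cs (r n) s * s x) - (\<Sum>s\<in>S. c s * s x))) \<longlonglongrightarrow> 0"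
    by (rule span_seq_compactD[OF span_seq_compact[OF S(1,2)], where cs = cs])
  have cont: "continuous_on {0..1} (\<lambda>x. (\<Sum>s\<in>S. cs (r n) s * s x) - (\<Sum>s\<in>S. c s * s x))" for n
    by (intro continuous_intros continuous_on_span_sum S(2))
  have "uniform_limit {0..1} (\<lambda>n x. \<Sum>s\<in>S. cs (r n) s * s x) (\<lambda>x. \<Sum>s\<in>S. c s * s x) sequentially"
    by (subst uniform_limit_iff_supn[OF cont]) (rule c)
  moreover have "h (r n) x = (\<Sum>s\<in>S. cs (r n) s * s x)" if "x \<in> {0..1}" for n x
    using cs[of "r n"] that unfolding eq01_def by blast
  then have "uniform_limit {0..1} (\<lambda>n. h (r n)) (\<lambda>x. \<Sum>s\<in>S. c s * s x) sequentially \<longleftrightarrow>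
      uniform_limit {0..1} (\<lambda>n x. \<Sum>s\<in>S. cs (r n) s * s x) (\<lambda>x. \<Sum>s\<in>S. c s * s x) sequentially"
    by (intro uniform_limit_cong') simp_all
  ultimately have "uniform_limit {0..1} (\<lambda>n. h (r n)) (\<lambda>x. \<Sum>s\<in>S. c s * s x) sequentially"
    by simp
  then show ?thesis
    by (rule that[OF r continuous_on_span_sum[OF S(2)]])
qed

lemma sup_compact_subseq:
  fixes s :: "nat \<Rightarrow> real \<Rightarrow> real"
  assumes "sup_compact K" "K \<subseteq> C01" "\<And>n. s n \<in> K"
  obtains a r where "a \<in> K" "strict_mono r" "uniform_limit {0..1} (\<lambda>n. s (r n)) a sequentially"
proof -
  obtain a r where a: "a \<in> K" and r: "strict_mono r"
    and lim: "(\<lambda>n. supn (\<lambda>x. s (r n) x - a x)) \<longlonglongrightarrow> 0"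
    using assms(1,3) unfolding sup_compact_def by blast
  have cont: "continuous_on {0..1} (\<lambda>x. s (r n) x - a x)" for n
    using assms(2,3) a by (auto simp: C01_def intro!: continuous_intros)
  have "uniform_limit {0..1} (\<lambda>n. s (r n)) a sequentially"
    by (subst uniform_limit_iff_supn[OF cont]) (rule lim)
  with a r show ?thesis by (rule that)
qed

lemma uniform_limit_subseq:
  "uniform_limit S f l sequentially \<Longrightarrow> strict_mono r \<Longrightarrow> uniform_limit S (\<lambda>n. f (r n)) l sequentially"
  by (rule filterlim_compose[OF _ filterlim_subseq])

lemma fin_dim_subspace_scaled_diff:
  assumes "fin_dim_subspace W" "a \<in> W" "b \<in> W"
  shows "(\<lambda>z. (a z - b z) / c) \<in> W"
proof -
  have "(\<lambda>z. (1 / c) * (a z + (-1) * b z)) \<in> W"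
    using assms by (intro fin_dim_subspace_scale fin_dim_subspace_add)
  then show ?thesis by simp
qed

lemma convergent_normalised_differences:
  fixes A1 A2 :: "nat \<Rightarrow> real \<Rightarrow> real" and \<delta> :: "nat \<Rightarrow> real"
  assumes "sup_compact K" "K \<subseteq> W" "fin_dim_subspace W" "\<And>n. A1 n \<in> K" "\<And>n. A2 n \<in> K"
    and "\<And>n. supn (\<lambda>z. (A1 n z - A2 n z) / \<delta> n) \<le> 1"
  obtains \<rho> a1 a2 d where "strict_mono \<rho>" "a1 \<in> K" "a2 \<in> K" "continuous_on {0..1} d"
    "uniform_limit {0..1} (\<lambda>n. A1 (\<rho> n)) a1 sequentially"
    "uniform_limit {0..1} (\<lambda>n. A2 (\<rho> n)) a2 sequentially"
    "uniform_limit {0..1} (\<lambda>n z. (A1 (\<rho> n) z - A2 (\<rho> n) z) / \<delta> (\<rho> n)) d sequentially"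
proof -
  have KC: "K \<subseteq> C01"
    using assms(2) fin_dim_subspace_C01[OF assms(3)] by blast
  obtain a1 r1 where a1: "a1 \<in> K" "strict_mono r1" "uniform_limit {0..1} (\<lambda>n. A1 (r1 n)) a1 sequentially"
    by (rule sup_compact_subseq[OF assms(1) KC assms(4)])
  have "A2 (r1 n) \<in> K" for n
    by (rule assms(5))
  then obtain a2 r2 where a2: "a2 \<in> K" "strict_mono r2" "uniform_limit {0..1} (\<lambda>n. A2 (r1 (r2 n))) a2 sequentially"
    by (rule sup_compact_subseq[OF assms(1) KC])
  have "(\<lambda>z. (A1 (r1 (r2 n)) z - A2 (r1 (r2 n)) z) / \<delta> (r1 (r2 n))) \<in> W" for n
    using assms(2,4,5) by (intro fin_dim_subspace_scaled_diff assms(3)) auto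
  then obtain r3 d where r3: "strict_mono r3" "continuous_on {0..1} d"
    "uniform_limit {0..1} (\<lambda>n z. (A1 (r1 (r2 (r3 n))) z - A2 (r1 (r2 (r3 n))) z) / \<delta> (r1 (r2 (r3 n)))) d sequentially"
    by (rule fin_dim_subspace_bounded_subseq[OF assms(3) _ assms(6)])
  show ?thesis
  proof (rule that[of "\<lambda>n. r1 (r2 (r3 n))" a1 a2 d])
    show "strict_mono (\<lambda>n. r1 (r2 (r3 n)))"
      using strict_mono_o[OF a1(2) strict_mono_o[OF a2(2) r3(1)]] by (simp add: o_def)
    show "uniform_limit {0..1} (\<lambda>n. A1 (r1 (r2 (r3 n)))) a1 sequentially"
      using uniform_limit_subseq[OF a1(3) strict_mono_o[OF a2(2) r3(1)]] by (simp add: o_def)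
    show "uniform_limit {0..1} (\<lambda>n. A2 (r1 (r2 (r3 n)))) a2 sequentially"
      using uniform_limit_subseq[OF a2(3) r3(1)] .
  qed (rule a1(1) a2(1) r3(2) r3(3))+
qed

section \<open>Indefinite integrals and the operator \<open>F\<close>\<close>

lemma integrable_on_initial_segment:
  fixes \<psi> :: "real \<Rightarrow> real"
  shows "continuous_on {0..1} \<psi> \<Longrightarrow> x \<in> {0..1} \<Longrightarrow> \<psi> integrable_on {0..x}"
  by (intro integrable_continuous_real) (auto elim!: continuous_on_subset)

lemma continuous_on_indefinite_integral:
  fixes \<psi> :: "real \<Rightarrow> real"
  shows "continuous_on {0..1} \<psi> \<Longrightarrow> continuous_on {0..1} (\<lambda>x. integral {0..x} \<psi>)"
  by (intro indefinite_integral_continuous_1 integrable_continuous_real)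

lemma uniform_limit_indefinite_integral:
  fixes \<psi> :: "nat \<Rightarrow> real \<Rightarrow> real"
  assumes cont: "\<And>n. continuous_on {0..1} (\<psi> n)" "continuous_on {0..1} \<psi>'"
    and lim: "uniform_limit {0..1} \<psi> \<psi>' sequentially"
  shows "uniform_limit {0..1} (\<lambda>n x. integral {0..x} (\<psi> n)) (\<lambda>x. integral {0..x} \<psi>') sequentially"
proof (rule uniform_limitI)
  fix e :: real
  assume "e > 0"
  then have "\<forall>\<^sub>F n in sequentially. \<forall>z\<in>{0..1}. dist (\<psi> n z) (\<psi>' z) < e / 2"
    using uniform_limitD[OF lim, of "e / 2"] by simp
  then show "\<forall>\<^sub>F n in sequentially. \<forall>x\<in>{0..1}. dist (integral {0..x} (\<psi> n)) (integral {0..x} \<psi>') < e"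
  proof (rule eventually_mono, intro ballI)
    fix n and x :: real
    assume close: "\<forall>z\<in>{0..1}. dist (\<psi> n z) (\<psi>' z) < e / 2" and x: "x \<in> {0..1}"
    have "integral {0..x} (\<psi> n) - integral {0..x} \<psi>' = integral {0..x} (\<lambda>z. \<psi> n z - \<psi>' z)"
      using integrable_on_initial_segment[OF cont(1) x] integrable_on_initial_segment[OF cont(2) x]
      by (simp add: integral_diff)
    also have "norm \<dots> \<le> e / 2 * (x - 0)"
    proof (rule integral_bound)
      show "continuous_on {0..x} (\<lambda>z. \<psi> n z - \<psi>' z)"
        using x by (intro continuous_intros) (auto intro: continuous_on_subset[OF cont(1)] continuous_on_subset[OF cont(2)])
      fix z
      assume "z \<in> {0..x}"
      then show "norm (\<psi> n z - \<psi>' z) \<le> e / 2"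
        using close x by (force simp: dist_real_def)
    qed (use x in simp)
    also have "\<dots> < e"
      using x \<open>e > 0\<close> by (auto intro: mult_left_le_one_le)
    finally show "dist (integral {0..x} (\<psi> n)) (integral {0..x} \<psi>') < e"
      by (simp add: dist_real_def)
  qed
qed

lemma indefinite_integral_eq_0_imp_eq_0:
  fixes \<psi> :: "real \<Rightarrow> real"
  assumes "continuous_on {0..1} \<psi>" "\<And>x. x \<in> {0..1} \<Longrightarrow> integral {0..x} \<psi> = 0" "x \<in> {0..1}"
  shows "\<psi> x = 0"
proof -
  have "((\<lambda>u. integral {0..u} \<psi>) has_vector_derivative \<psi> x) (at x within cbox 0 1)"
    using integral_has_vector_derivative[OF assms(1,3)] by (simp add: cbox_interval)
  moreover have "((\<lambda>u. integral {0..u} \<psi>) has_vector_derivative 0) (at x within cbox 0 1)"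
    by (rule has_vector_derivative_transform[OF _ _ has_vector_derivative_const])
      (use assms(2,3) in \<open>auto simp: cbox_interval\<close>)
  ultimately show ?thesis
    using vector_derivative_unique_within_closed_interval[of 0 1 x] assms(3)
    by (simp add: cbox_interval)
qed

text \<open>The weight may vanish at the left end point; continuity of \<open>H\<close> takes care of it.\<close>

lemma weighted_indefinite_integral_eq_0_imp_eq_0:
  fixes w H :: "real \<Rightarrow> real"
  assumes "continuous_on {0..1} w" "continuous_on {0..1} H"
    and "\<And>z. z \<in> {0<..1} \<Longrightarrow> w z \<noteq> 0"
    and "\<And>x. x \<in> {0..1} \<Longrightarrow> integral {0..x} (\<lambda>z. w z * H z) = 0"
  shows "\<And>x. x \<in> {0..1} \<Longrightarrow> H x = 0"
proof -
  have wH: "w z * H z = 0" if "z \<in> {0..1}" for z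
    by (rule indefinite_integral_eq_0_imp_eq_0[OF _ assms(4) that]) (intro continuous_intros assms(1,2))
  have "H z = 0" if "z \<in> {0<..1}" for z
    using wH[of z] assms(3)[OF that] that by simp
  then have "{0<..1} \<subseteq> {x \<in> {0..1}. H x = 0}"
    by auto
  moreover have "closed {x \<in> {0..1}. H x = 0}"
    by (rule continuous_closed_preimage_constant[OF assms(2)]) simp
  ultimately have "closure {0<..1::real} \<subseteq> {x \<in> {0..1}. H x = 0}"
    by (rule closure_minimal)
  then show "\<And>x. x \<in> {0..1} \<Longrightarrow> H x = 0"
    by auto
qed

lemma integral_pos:
  fixes f :: "real \<Rightarrow> real"
  assumes "continuous_on {0..1} f" "\<And>x. x \<in> {0..1} \<Longrightarrow> f x > 0" "x \<in> {0<..1}"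
  shows "integral {0..x} f > 0"
proof -
  obtain m where m: "m \<in> {0..1}" "\<And>y. y \<in> {0..1} \<Longrightarrow> f m \<le> f y"
    using continuous_attains_inf[OF compact_Icc _ assms(1)] by auto
  have "x * f m = integral {0..x} (\<lambda>_. f m)"
    using assms(3) by simp
  also have "\<dots> \<le> integral {0..x} f"
    by (rule integral_le) (use assms(3) m integrable_on_initial_segment[OF assms(1), of x] in auto)
  finally show ?thesis
    using assms(2,3) m by (smt (verit) greaterThanAtMost_iff mult_pos_pos)
qed

lemma Fop_C01:
  assumes "f \<in> C01" "a \<in> C01" "\<And>z. z \<in> {0..1} \<Longrightarrow> a z \<noteq> 0"
  shows "Fop f a \<in> C01"
  using assms unfolding Fop_def C01_def mem_Collect_eq
  by (intro continuous_on_indefinite_integral continuous_intros) auto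

lemma Fop_diff:
  assumes "continuous_on {0..1} f" "continuous_on {0..1} a1" "continuous_on {0..1} a2"
    and "\<And>z. z \<in> {0..1} \<Longrightarrow> a1 z \<noteq> 0" "\<And>z. z \<in> {0..1} \<Longrightarrow> a2 z \<noteq> 0"
    and "x \<in> {0..1}"
  shows "Fop f a1 x - Fop f a2 x
    = integral {0..x} (\<lambda>z. - (integral {0..z} f / (a1 z * a2 z)) * (a1 z - a2 z))"
proof -
  have "(\<lambda>z. integral {0..z} f / a z) integrable_on {0..x}"
    if "continuous_on {0..1} a" "\<And>z. z \<in> {0..1} \<Longrightarrow> a z \<noteq> 0" for a
    using that assms(1,6)
    by (intro integrable_on_initial_segment continuous_intros continuous_on_indefinite_integral) auto
  then have "Fop f a1 x - Fop f a2 x = integral {0..x} (\<lambda>z. integral {0..z} f / a1 z - integral {0..z} f / a2 z)"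
    unfolding Fop_def using assms(2-5) by (simp add: integral_diff)
  also have "\<dots> = integral {0..x} (\<lambda>z. - (integral {0..z} f / (a1 z * a2 z)) * (a1 z - a2 z))"
    using assms(4,5,6) by (intro integral_cong) (auto simp: field_simps)
  finally show ?thesis .
qed

lemma uniform_limit_Fop_difference_quotient:
  fixes A B :: "nat \<Rightarrow> real \<Rightarrow> real" and a b d :: "real \<Rightarrow> real" and \<delta> :: "nat \<Rightarrow> real"
  assumes f: "continuous_on {0..1} f" and "lam > 0" and "\<And>n. \<delta> n \<noteq> 0"
    and cont: "\<And>n. continuous_on {0..1} (A n)" "\<And>n. continuous_on {0..1} (B n)"
      "continuous_on {0..1} a" "continuous_on {0..1} b" "continuous_on {0..1} d"
    and lower: "\<And>n z. z \<in> {0..1} \<Longrightarrow> lam \<le> A n z" "\<And>n z. z \<in> {0..1} \<Longrightarrow> lam \<le> B n z"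
      "\<And>z. z \<in> {0..1} \<Longrightarrow> lam \<le> a z" "\<And>z. z \<in> {0..1} \<Longrightarrow> lam \<le> b z"
    and lim: "uniform_limit {0..1} A a sequentially" "uniform_limit {0..1} B b sequentially"
      "uniform_limit {0..1} (\<lambda>n z. (A n z - B n z) / \<delta> n) d sequentially"
  shows "uniform_limit {0..1} (\<lambda>n x. (Fop f (A n) x - Fop f (B n) x) / \<delta> n)
           (\<lambda>x. integral {0..x} (\<lambda>z. - (integral {0..z} f / (a z * b z)) * d z)) sequentially"
proof -
  define G where "G z = integral {0..z} f" for z
  define w where "w n z = - (G z / (A n z * B n z))" for n z
  define w' where "w' z = - (G z / (a z * b z))" for z
  have G: "continuous_on {0..1} G"
    unfolding G_def by (rule continuous_on_indefinite_integral[OF f])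
  have nonzero: "A n z \<noteq> 0" "B n z \<noteq> 0" "a z \<noteq> 0" "b z \<noteq> 0" if "z \<in> {0..1}" for n z
    using lower(1,2)[OF that, of n] lower(3,4)[OF that] \<open>lam > 0\<close> by auto
  have w: "continuous_on {0..1} (w n)" for n
    unfolding w_def using nonzero by (intro continuous_intros G cont) auto
  have w': "continuous_on {0..1} w'"
    unfolding w'_def using nonzero by (intro continuous_intros G cont) auto
  have bounded: "bounded (g ` {0..1})" if "continuous_on {0..1} g" for g :: "real \<Rightarrow> real"
    by (rule compact_imp_bounded[OF compact_continuous_image[OF that compact_Icc]])
  have prod: "uniform_limit {0..1} (\<lambda>n z. A n z * B n z) (\<lambda>z. a z * b z) sequentially"
    by (rule uniform_lim_mult[OF lim(1,2) bounded[OF cont(3)] bounded[OF cont(4)]])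
  have "lam * lam \<le> norm (a z * b z)" if "z \<in> {0..1}" for z
  proof -
    have "lam * lam \<le> a z * b z"
      using lower(3,4)[OF that] \<open>lam > 0\<close> by (intro mult_mono) auto
    then show ?thesis by simp
  qed
  from uniform_lim_divide[OF uniform_limit_const prod bounded[OF G] this]
  have "uniform_limit {0..1} w w' sequentially"
    unfolding w_def w'_def using \<open>lam > 0\<close> by (intro uniform_limit_uminus) simp
  from uniform_lim_mult[OF this lim(3) bounded[OF w'] bounded[OF cont(5)]]
  have "uniform_limit {0..1} (\<lambda>n z. w n z * ((A n z - B n z) / \<delta> n)) (\<lambda>z. w' z * d z) sequentially" .
  moreover have "continuous_on {0..1} (\<lambda>z. w n z * ((A n z - B n z) / \<delta> n))" for n
    using \<open>\<And>n. \<delta> n \<noteq> 0\<close> by (intro continuous_intros w cont) auto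
  moreover have "continuous_on {0..1} (\<lambda>z. w' z * d z)"
    by (intro continuous_intros w' cont)
  ultimately have lim_integral: "uniform_limit {0..1}
      (\<lambda>n x. integral {0..x} (\<lambda>z. w n z * ((A n z - B n z) / \<delta> n)))
      (\<lambda>x. integral {0..x} (\<lambda>z. w' z * d z)) sequentially"
    by (intro uniform_limit_indefinite_integral)
  have eq: "(Fop f (A n) x - Fop f (B n) x) / \<delta> n
      = integral {0..x} (\<lambda>z. w n z * ((A n z - B n z) / \<delta> n))" if "x \<in> {0..1}" for n x
  proof -
    have "Fop f (A n) x - Fop f (B n) x = integral {0..x} (\<lambda>z. w n z * (A n z - B n z))"
      unfolding w_def G_def by (rule Fop_diff[OF f cont(1,2) _ _ that]) (use nonzero in auto)
    then show ?thesis by simp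
  qed
  show ?thesis
    by (rule uniform_limit_cong'[THEN iffD2, OF _ _ lim_integral]) (simp_all add: eq w'_def G_def)
qed

lemma Fop_linearisation_injective:
  fixes f a1 a2 d :: "real \<Rightarrow> real"
  assumes f: "continuous_on {0..1} f" "\<And>x. x \<in> {0..1} \<Longrightarrow> f x > 0"
    and a: "continuous_on {0..1} a1" "continuous_on {0..1} a2"
      "\<And>z. z \<in> {0..1} \<Longrightarrow> a1 z > 0" "\<And>z. z \<in> {0..1} \<Longrightarrow> a2 z > 0"
    and "continuous_on {0..1} d"
    and vanish: "\<And>x. x \<in> {0..1} \<Longrightarrow> integral {0..x} (\<lambda>z. - (integral {0..z} f / (a1 z * a2 z)) * d z) = 0"
  shows "\<And>x. x \<in> {0..1} \<Longrightarrow> d x = 0"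
proof (rule weighted_indefinite_integral_eq_0_imp_eq_0[OF _ \<open>continuous_on {0..1} d\<close> _ vanish])
  show "continuous_on {0..1} (\<lambda>z. - (integral {0..z} f / (a1 z * a2 z)))"
    using a(3,4) by (intro continuous_intros continuous_on_indefinite_integral f a(1,2)) force
next
  fix z :: real
  assume "z \<in> {0<..1}"
  then show "- (integral {0..z} f / (a1 z * a2 z)) \<noteq> 0"
    using integral_pos[OF f] a(3,4)[of z] by force
qed

section \<open>The stability estimate\<close>

lemma ratio_tendsto_0_if_dominated:
  fixes s t :: "nat \<Rightarrow> real"
  assumes "\<And>n. 0 \<le> s n" "\<And>n. (real n + 1) * s n < t n"
  shows "(\<lambda>n. s n / t n) \<longlonglongrightarrow> 0"
proof -
  have t: "0 < t n" for n
    using assms(1,2)[of n] mult_nonneg_nonneg[of "real n + 1" "s n"] by linarith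
  have upper: "s n / t n \<le> 1 / (real n + 1)" for n
    using assms(2)[of n] t[of n] by (simp add: field_simps)
  have lower: "0 \<le> s n / t n" for n
    using assms(1)[of n] t[of n] by simp
  have bound_lim: "(\<lambda>n. 1 / (real n + 1)) \<longlonglongrightarrow> 0"
    using LIMSEQ_Suc[OF lim_const_over_n[of 1]] by (simp add: add.commute)
  show ?thesis
    by (rule real_tendsto_sandwich[OF always_eventually always_eventually tendsto_const bound_lim])
      (simp_all add: upper lower)
qed

lemma limit_direction_eq_0:
  fixes Q :: "nat \<Rightarrow> (real \<Rightarrow> real) \<Rightarrow> (real \<Rightarrow> real)"
    and A B :: "nat \<Rightarrow> real \<Rightarrow> real" and a b d :: "real \<Rightarrow> real" and \<delta> :: "nat \<Rightarrow> real"
  assumes f: "f \<in> C01" "\<And>x. x \<in> {0..1} \<Longrightarrow> f x > 0" and "lam > 0" and \<delta>: "\<And>n. \<delta> n \<noteq> 0"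
    and Q: "\<And>n. bounded_finite_rank_op (Q n)" "\<And>n g. g \<in> C01 \<Longrightarrow> supn (Q n g) \<le> C * supn g"
      "\<And>g. g \<in> C01 \<Longrightarrow> (\<lambda>n. supn (\<lambda>x. Q n g x - g x)) \<longlonglongrightarrow> 0"
    and C01: "\<And>n. A n \<in> C01" "\<And>n. B n \<in> C01" "a \<in> C01" "b \<in> C01" "continuous_on {0..1} d"
    and lower: "\<And>n z. z \<in> {0..1} \<Longrightarrow> lam \<le> A n z" "\<And>n z. z \<in> {0..1} \<Longrightarrow> lam \<le> B n z"
      "\<And>z. z \<in> {0..1} \<Longrightarrow> lam \<le> a z" "\<And>z. z \<in> {0..1} \<Longrightarrow> lam \<le> b z"
    and lim: "uniform_limit {0..1} A a sequentially" "uniform_limit {0..1} B b sequentially"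
      "uniform_limit {0..1} (\<lambda>n z. (A n z - B n z) / \<delta> n) d sequentially"
    and vanish: "(\<lambda>n. supn (Q n (\<lambda>x. (Fop f (A n) x - Fop f (B n) x) / \<delta> n))) \<longlonglongrightarrow> 0"
  shows "\<And>x. x \<in> {0..1} \<Longrightarrow> d x = 0"
proof -
  have cont: "continuous_on {0..1} f" "\<And>n. continuous_on {0..1} (A n)" "\<And>n. continuous_on {0..1} (B n)"
    "continuous_on {0..1} a" "continuous_on {0..1} b"
    using f(1) C01(1-4) by (simp_all add: C01_def)
  have pos: "0 < A n z" "0 < B n z" "0 < a z" "0 < b z" if "z \<in> {0..1}" for n z
    using lower[OF that] \<open>lam > 0\<close> by (auto intro: less_le_trans)
  define v where "v n x = (Fop f (A n) x - Fop f (B n) x) / \<delta> n" for n x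
  define v' where "v' x = integral {0..x} (\<lambda>z. - (integral {0..z} f / (a z * b z)) * d z)" for x
  have lim_v: "uniform_limit {0..1} v v' sequentially"
    unfolding v_def v'_def
    by (rule uniform_limit_Fop_difference_quotient[OF cont(1) \<open>lam > 0\<close> \<delta> cont(2-5) C01(5) lower lim])
  have "Fop f (A n) \<in> C01" for n
    by (rule Fop_C01[OF f(1) C01(1)], drule pos(1)[of _ n], simp)
  moreover have "Fop f (B n) \<in> C01" for n
    by (rule Fop_C01[OF f(1) C01(2)], drule pos(2)[of _ n], simp)
  ultimately have vC: "v n \<in> C01" for n
    using \<delta>[of n] unfolding v_def C01_def mem_Collect_eq
    by (intro continuous_on_divide[OF continuous_on_diff continuous_on_const]) auto
  have v'C: "v' \<in> C01"
    using uniform_limit_theorem[OF always_eventually lim_v] vC by (simp add: C01_def)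
  have sup_v': "supn v' = 0"
    using supn_eq_0_if_images_vanish[OF Q(1,2) Q(3)[OF v'C] vC v'C lim_v] vanish
    by (simp add: v_def)
  have v'0: "v' x = 0" if "x \<in> {0..1}" for x
    by (rule supn_eq_0D[OF _ sup_v' that]) (use v'C in \<open>simp add: C01_def\<close>)
  show "\<And>x. x \<in> {0..1} \<Longrightarrow> d x = 0"
    by (rule Fop_linearisation_injective[OF cont(1) f(2) cont(4,5) _ _ C01(5)])
      (use pos v'0 in \<open>simp_all add: v'_def\<close>)
qed

lemma no_unstable_sequences:
  fixes f :: "real \<Rightarrow> real" and lam :: real and W K :: "(real \<Rightarrow> real) set"
    and Q :: "nat \<Rightarrow> (real \<Rightarrow> real) \<Rightarrow> (real \<Rightarrow> real)" and A1 A2 :: "nat \<Rightarrow> real \<Rightarrow> real"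
  assumes f: "f \<in> C01" "\<forall>x\<in>{0..1}. f x > 0" and "lam > 0"
    and W: "fin_dim_subspace W" and K: "K \<subseteq> W \<inter> H lam" "sup_compact K"
    and Q: "\<forall>N. bounded_finite_rank_op (Q N)"
    and conv: "\<forall>g\<in>C01. (\<lambda>N. supn (\<lambda>x. Q N g x - g x)) \<longlonglongrightarrow> 0"
    and A: "\<And>n. A1 n \<in> K" "\<And>n. A2 n \<in> K"
    and unstable: "\<And>n. (real n + 1) * supn (\<lambda>x. Q n (Fop f (A1 n)) x - Q n (Fop f (A2 n)) x)
      < supn (\<lambda>x. A1 n x - A2 n x)"
  shows False
proof -
  have KC: "a \<in> C01" and lower: "x \<in> {0..1} \<Longrightarrow> lam \<le> a x" if "a \<in> K" for a x
    using K(1) that by (auto simp: H_def less_imp_le)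
  have FC: "Fop f a \<in> C01" if "a \<in> K" for a
    using lower[OF that] \<open>lam > 0\<close> by (intro Fop_C01 f(1) KC that) force
  define \<delta> where "\<delta> n = supn (\<lambda>x. A1 n x - A2 n x)" for n
  define q where "q n = supn (\<lambda>x. Q n (Fop f (A1 n)) x - Q n (Fop f (A2 n)) x)" for n
  have q: "0 \<le> q n" for n
    unfolding q_def using bounded_finite_rank_op_continuous[OF Q[rule_format] FC] A
    by (intro supn_nonneg continuous_on_diff) blast+
  have \<delta>: "\<delta> n > 0" for n
  proof -
    have "0 \<le> (real n + 1) * q n" using q[of n] by simp
    then show ?thesis using unstable[of n] unfolding \<delta>_def q_def by linarith
  qed
  have quotient_cont: "continuous_on {0..1} (\<lambda>z. (A1 n z - A2 n z) / \<delta> n)" for n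
    using \<delta>[of n] KC[OF A(1)] KC[OF A(2)] unfolding C01_def
    by (intro continuous_on_divide[OF continuous_on_diff continuous_on_const]) auto
  have normalised: "supn (\<lambda>z. (A1 n z - A2 n z) / \<delta> n) = 1" for n
    using supn_normalised[of "\<lambda>z. A1 n z - A2 n z"] \<delta>[of n] KC[OF A(1)] KC[OF A(2)]
    unfolding \<delta>_def C01_def by (simp add: continuous_on_diff)
  obtain \<rho> a1 a2 d where \<rho>: "strict_mono \<rho>" and a: "a1 \<in> K" "a2 \<in> K"
    and dc: "continuous_on {0..1} d"
    and lim: "uniform_limit {0..1} (\<lambda>n. A1 (\<rho> n)) a1 sequentially"
      "uniform_limit {0..1} (\<lambda>n. A2 (\<rho> n)) a2 sequentially"
      "uniform_limit {0..1} (\<lambda>n z. (A1 (\<rho> n) z - A2 (\<rho> n) z) / \<delta> (\<rho> n)) d sequentially"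
    by (rule convergent_normalised_differences[OF K(2) _ W A]) (use K(1) in blast, rule eq_refl[OF normalised])
  have ratio: "(\<lambda>n. q (\<rho> n) / \<delta> (\<rho> n)) \<longlonglongrightarrow> 0"
    using LIMSEQ_subseq_LIMSEQ[OF ratio_tendsto_0_if_dominated[OF q unstable[folded q_def \<delta>_def]] \<rho>]
    by (simp add: o_def)
  have scaled: "supn (Q (\<rho> n) (\<lambda>x. (Fop f (A1 (\<rho> n)) x - Fop f (A2 (\<rho> n)) x) / \<delta> (\<rho> n)))
      = q (\<rho> n) / \<delta> (\<rho> n)" for n
    using supn_bounded_finite_rank_op_scaled_diff[OF Q[rule_format] FC[OF A(1)] FC[OF A(2)]] \<delta>[of "\<rho> n"]
    by (simp add: q_def)
  obtain C where C: "\<And>N g. g \<in> C01 \<Longrightarrow> supn (Q N g) \<le> C * supn g"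
    using strong_convergence_imp_uniformly_bounded[OF Q[rule_format] conv[rule_format]] by blast
  have strong: "(\<lambda>n. supn (\<lambda>x. Q (\<rho> n) g x - g x)) \<longlonglongrightarrow> 0" if "g \<in> C01" for g
    using LIMSEQ_subseq_LIMSEQ[OF conv[rule_format, OF that] \<rho>] by (simp add: o_def)
  have \<delta>_nonzero: "\<delta> n \<noteq> 0" for n
    using \<delta>[of n] by simp
  have d0: "d x = 0" if "x \<in> {0..1}" for x
    by (rule limit_direction_eq_0[where Q = "\<lambda>n. Q (\<rho> n)" and A = "\<lambda>n. A1 (\<rho> n)"
          and B = "\<lambda>n. A2 (\<rho> n)" and \<delta> = "\<lambda>n. \<delta> (\<rho> n)" and f = f and lam = lam and C = C
          and a = a1 and b = a2 and d = d])
      (simp_all add: f \<open>lam > 0\<close> \<delta>_nonzero Q C strong KC A a lower dc lim scaled ratio that,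
        use that in simp)
  have "(\<lambda>n. supn (\<lambda>z. (A1 (\<rho> n) z - A2 (\<rho> n) z) / \<delta> (\<rho> n))) \<longlonglongrightarrow> supn d"
    by (rule tendsto_supn_uniform_limit[OF quotient_cont dc lim(3)])
  moreover have "supn d = 0"
    using supn_cong[of d "\<lambda>x. 0"] d0 by simp
  ultimately show False
    by (simp add: normalised LIMSEQ_const_iff)
qed

theorem mainTheorem8:
  fixes f :: "real \<Rightarrow> real" and lam :: real
    and W K :: "(real \<Rightarrow> real) set"
    and Q :: "nat \<Rightarrow> (real \<Rightarrow> real) \<Rightarrow> (real \<Rightarrow> real)"
  assumes "f \<in> C01" and "\<forall>x\<in>{0..1}. f x > 0" and "lam > 0"
    and "fin_dim_subspace W"
    and "K \<subseteq> W \<inter> H lam" and "sup_compact K" and "fconvex K"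
    and "\<forall>N. bounded_finite_rank_op (Q N)"
    and "\<forall>g\<in>C01. (\<lambda>N. supn (\<lambda>x. Q N g x - g x)) \<longlonglongrightarrow> 0"
  shows "\<exists>D::nat. \<exists>C>0. \<forall>a1\<in>K. \<forall>a2\<in>K.
           supn (\<lambda>x. a1 x - a2 x) \<le> C * supn (\<lambda>x. Q D (Fop f a1) x - Q D (Fop f a2) x)"
proof (rule ccontr)
  assume no_bound: "\<not> ?thesis"
  have "\<exists>a1\<in>K. \<exists>a2\<in>K. (real n + 1) * supn (\<lambda>x. Q n (Fop f a1) x - Q n (Fop f a2) x)
      < supn (\<lambda>x. a1 x - a2 x)" for n
  proof (rule ccontr)
    assume "\<not> ?thesis"
    then have "\<forall>a1\<in>K. \<forall>a2\<in>K. supn (\<lambda>x. a1 x - a2 x)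
        \<le> (real n + 1) * supn (\<lambda>x. Q n (Fop f a1) x - Q n (Fop f a2) x)"
      by (auto simp: not_less)
    moreover have "real n + 1 > 0" by simp
    ultimately show False
      using no_bound by blast
  qed
  then obtain A1 A2 where "\<And>n. A1 n \<in> K" "\<And>n. A2 n \<in> K"
    "\<And>n. (real n + 1) * supn (\<lambda>x. Q n (Fop f (A1 n)) x - Q n (Fop f (A2 n)) x)
      < supn (\<lambda>x. A1 n x - A2 n x)"
    by metis
  then show False
    by (rule no_unstable_sequences[OF assms(1-6,8,9)])
qed

end
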